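(* Under the standing assumptions below, let $a=v+ix\in B$ with $v\in V$ and $0\le i<k$. Then: (1) $a\in Z(B,+)$ if and only if $Av=v$ and $A^i(w)=-v+w+v$ for all $w\in V$; (2) $V\cap Z(B,+)=0$; (3) $\mathrm{Soc}(B)=0$, where $\mathrm{Soc}(B)=\{b\in B:\lambda_b=\mathrm{id}\text{ and }b\in Z(B,+)\}$.
   Context: Skew left brace $(B,+,\circ)$: groups $(B,+)$, $(B,\circ)$ with $a\circ(b+c)=a\circ b-a+a\circ c$; $\lambda_a(b)=-a+a\circ b$, $\sigma_a(b)=-a+b+a$, $a*b=-a+a\circ b-b$. Ideal: normal subgroup $I$ of $(B,+)$, $\lambda_a(I)\subseteq I$ for all $a$, normal in $(B,\circ)$. $I*J$ = additive subgroup generated by $\{i*j\}$; $B^{(2)}=B*B$, $B^{(3)}=B^{(2)}*B$. Standing assumptions: $B$ is a finite skew left brace and $X\subseteq B$ with $|X|\ge3$ and $\lambda_a(X)=X$, $\sigma_a(X)=X$ for all $a\in B$; $B$ is additively generated by $X$; the ideal $V$ generated by $\{x-y:x,y\in X\}$ is the smallest non-zero ideal of $B$; $B/V$ is a trivial skew left brace with cyclic additive group; the group $\{\sigma_a\lambda_b|_X:a,b\in V\}$ acts transitively on $X$; and $B^{(3)}=0$. Fix $x\in X$ and let $k=|B/V|$; then every element of $B$ is uniquely $v+ix$ with $v\in V$, $0\le i<k$. $A\in\mathrm{Aut}(V,+)$ is $Av=x+v-x$. *)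

theory Defs
  imports "HOL-Algebra.Algebra"
begin

definition addG :: "'a set \<Rightarrow> ('a \<Rightarrow> 'a \<Rightarrow> 'a) \<Rightarrow> 'a \<Rightarrow> 'a monoid" where
  "addG B p z = \<lparr>carrier = B, monoid.mult = p, monoid.one = z\<rparr>"

definition circ_one :: "'a set \<Rightarrow> ('a \<Rightarrow> 'a \<Rightarrow> 'a) \<Rightarrow> 'a" where
  "circ_one B c = (THE e. e \<in> B \<and> (\<forall>a\<in>B. c e a = a \<and> c a e = a))"

definition circG :: "'a set \<Rightarrow> ('a \<Rightarrow> 'a \<Rightarrow> 'a) \<Rightarrow> 'a monoid" where
  "circG B c = \<lparr>carrier = B, monoid.mult = c, monoid.one = circ_one B c\<rparr>"

definition bneg :: "'a set \<Rightarrow> ('a \<Rightarrow> 'a \<Rightarrow> 'a) \<Rightarrow> 'a \<Rightarrow> 'a \<Rightarrow> 'a" where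
  "bneg B p z a = inv\<^bsub>addG B p z\<^esub> a"

definition skew_brace :: "'a set \<Rightarrow> ('a \<Rightarrow> 'a \<Rightarrow> 'a) \<Rightarrow> 'a \<Rightarrow> ('a \<Rightarrow> 'a \<Rightarrow> 'a) \<Rightarrow> bool" where
  "skew_brace B p z c \<longleftrightarrow>
     group (addG B p z) \<and> (\<exists>e. group \<lparr>carrier = B, monoid.mult = c, monoid.one = e\<rparr>) \<and>
     (\<forall>a\<in>B. \<forall>b\<in>B. \<forall>d\<in>B. c a (p b d) = p (p (c a b) (bneg B p z a)) (c a d))"

definition blam :: "'a set \<Rightarrow> ('a \<Rightarrow> 'a \<Rightarrow> 'a) \<Rightarrow> 'a \<Rightarrow> ('a \<Rightarrow> 'a \<Rightarrow> 'a) \<Rightarrow> 'a \<Rightarrow> 'a \<Rightarrow> 'a" where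
  "blam B p z c a b = p (bneg B p z a) (c a b)"

definition bsig :: "'a set \<Rightarrow> ('a \<Rightarrow> 'a \<Rightarrow> 'a) \<Rightarrow> 'a \<Rightarrow> 'a \<Rightarrow> 'a \<Rightarrow> 'a" where
  "bsig B p z a b = p (p (bneg B p z a) b) a"

definition bstar :: "'a set \<Rightarrow> ('a \<Rightarrow> 'a \<Rightarrow> 'a) \<Rightarrow> 'a \<Rightarrow> ('a \<Rightarrow> 'a \<Rightarrow> 'a) \<Rightarrow> 'a \<Rightarrow> 'a \<Rightarrow> 'a" where
  "bstar B p z c a b = p (p (bneg B p z a) (c a b)) (bneg B p z b)"

definition brace_ideal :: "'a set \<Rightarrow> ('a \<Rightarrow> 'a \<Rightarrow> 'a) \<Rightarrow> 'a \<Rightarrow> ('a \<Rightarrow> 'a \<Rightarrow> 'a) \<Rightarrow> 'a set \<Rightarrow> bool" where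
  "brace_ideal B p z c I \<longleftrightarrow>
     normal I (addG B p z) \<and> (\<forall>a\<in>B. blam B p z c a ` I \<subseteq> I) \<and> normal I (circG B c)"

definition ideal_gen :: "'a set \<Rightarrow> ('a \<Rightarrow> 'a \<Rightarrow> 'a) \<Rightarrow> 'a \<Rightarrow> ('a \<Rightarrow> 'a \<Rightarrow> 'a) \<Rightarrow> 'a set \<Rightarrow> 'a set" where
  "ideal_gen B p z c S = \<Inter>{I. brace_ideal B p z c I \<and> S \<subseteq> I}"

definition star_set :: "'a set \<Rightarrow> ('a \<Rightarrow> 'a \<Rightarrow> 'a) \<Rightarrow> 'a \<Rightarrow> ('a \<Rightarrow> 'a \<Rightarrow> 'a) \<Rightarrow> 'a set \<Rightarrow> 'a set \<Rightarrow> 'a set" where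
  "star_set B p z c I J = generate (addG B p z) {u. \<exists>i\<in>I. \<exists>j\<in>J. u = bstar B p z c i j}"

definition add_center :: "'a set \<Rightarrow> ('a \<Rightarrow> 'a \<Rightarrow> 'a) \<Rightarrow> 'a set" where
  "add_center B p = {a \<in> B. \<forall>b\<in>B. p a b = p b a}"

definition socle :: "'a set \<Rightarrow> ('a \<Rightarrow> 'a \<Rightarrow> 'a) \<Rightarrow> 'a \<Rightarrow> ('a \<Rightarrow> 'a \<Rightarrow> 'a) \<Rightarrow> 'a set" where
  "socle B p z c = {b \<in> B. (\<forall>d\<in>B. blam B p z c b d = d) \<and> b \<in> add_center B p}"

end

theory Submission
  imports Defs
begin

text \<open>
  Because B^(3) = 0, every element of B^(2) = B * B acts trivially through lambda, so B^(2) is an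
  ideal as soon as it is non-zero; minimality then puts V inside B^(2), and in any case lambda_u = id
  for u in V. An additive normal, lambda-invariant subgroup on which lambda is trivial is an ideal:
  this applies to V \<inter> Z(B,+), and Soc(B) is an ideal anyway. If V were central, every
  sigma_a lambda_b with a, b in V would fix X pointwise, contradicting transitivity on X with
  |X| > 1; so minimality forces V \<inter> Z(B,+) = 0 and Soc(B) = 0.
  For (1), B is additively generated by X \<subseteq> V + x, so v + ix is central iff it commutes with
  x and with V, and these two conditions unfold to Av = v and A^i w = -v + w + v.
\<close>

lemma (in group) normal_Inter:
  assumes "A \<noteq> {}" and "\<And>N. N \<in> A \<Longrightarrow> N \<lhd> G"
  shows "\<Inter>A \<lhd> G"
  using assms by (auto simp: normal_inv_iff intro!: subgroups_Inter)

locale skew_left_brace =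
  fixes B :: "'a set"
    and p :: "'a \<Rightarrow> 'a \<Rightarrow> 'a" (infixl "+\<^sub>B" 65)
    and z :: 'a
    and c :: "'a \<Rightarrow> 'a \<Rightarrow> 'a" (infixl "\<circ>\<^sub>B" 70)
  assumes skew_brace: "skew_brace B p z c"
begin

abbreviation G :: "'a monoid" where "G \<equiv> addG B p z"
abbreviation neg :: "'a \<Rightarrow> 'a" ("-\<^sub>B _" [80] 80) where "neg \<equiv> bneg B p z"
abbreviation cinv :: "'a \<Rightarrow> 'a" where "cinv a \<equiv> inv\<^bsub>circG B c\<^esub> a"
abbreviation lam :: "'a \<Rightarrow> 'a \<Rightarrow> 'a" where "lam \<equiv> blam B p z c"
abbreviation Z :: "'a set" where "Z \<equiv> add_center B p"
abbreviation star :: "'a \<Rightarrow> 'a \<Rightarrow> 'a" (infixl "*\<^sub>B" 70) where "star \<equiv> bstar B p z c"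
abbreviation B2 :: "'a set" where "B2 \<equiv> star_set B p z c B B"

sublocale add: group G
  using skew_brace by (simp add: skew_brace_def)

lemma addG_simps [simp]:
  "carrier G = B" "monoid.mult G = p" "one G = z" "inv\<^bsub>G\<^esub> a = -\<^sub>B a"
  by (simp_all add: addG_def bneg_def)

lemma add_closed [simp, intro]: "a \<in> B \<Longrightarrow> b \<in> B \<Longrightarrow> a +\<^sub>B b \<in> B"
  using add.m_closed by simp

lemma zero_closed [simp, intro]: "z \<in> B"
  using add.one_closed by simp

lemma neg_closed [simp, intro]: "a \<in> B \<Longrightarrow> -\<^sub>B a \<in> B"
  using add.inv_closed by simp

lemma add_assoc: "a \<in> B \<Longrightarrow> b \<in> B \<Longrightarrow> d \<in> B \<Longrightarrow> a +\<^sub>B b +\<^sub>B d = a +\<^sub>B (b +\<^sub>B d)"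
  using add.m_assoc by simp

lemma add_zero_left [simp]: "a \<in> B \<Longrightarrow> z +\<^sub>B a = a"
  using add.l_one by simp

lemma add_zero_right [simp]: "a \<in> B \<Longrightarrow> a +\<^sub>B z = a"
  using add.r_one by simp

lemma add_neg_right [simp]: "a \<in> B \<Longrightarrow> a +\<^sub>B -\<^sub>B a = z"
  using add.r_inv by simp

lemma add_neg_left [simp]: "a \<in> B \<Longrightarrow> -\<^sub>B a +\<^sub>B a = z"
  using add.l_inv by simp

lemma add_neg_cancel_left [simp]: "a \<in> B \<Longrightarrow> b \<in> B \<Longrightarrow> a +\<^sub>B (-\<^sub>B a +\<^sub>B b) = b"
  by (simp add: add_assoc[symmetric])

lemma neg_add_cancel_left [simp]: "a \<in> B \<Longrightarrow> b \<in> B \<Longrightarrow> -\<^sub>B a +\<^sub>B (a +\<^sub>B b) = b"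
  by (simp add: add_assoc[symmetric])

lemma neg_neg [simp]: "a \<in> B \<Longrightarrow> -\<^sub>B -\<^sub>B a = a"
  using add.inv_inv by simp

lemma neg_zero [simp]: "-\<^sub>B z = z"
  using add.inv_one by simp

lemma neg_add: "a \<in> B \<Longrightarrow> b \<in> B \<Longrightarrow> -\<^sub>B (a +\<^sub>B b) = -\<^sub>B b +\<^sub>B -\<^sub>B a"
  using add.inv_mult_group by simp

lemma neg_eq_if_add_eq_zero: "a \<in> B \<Longrightarrow> b \<in> B \<Longrightarrow> a +\<^sub>B b = z \<Longrightarrow> -\<^sub>B a = b"
  by (metis neg_add_cancel_left add_zero_right neg_closed)

lemma add_left_cancel_iff: "a \<in> B \<Longrightarrow> b \<in> B \<Longrightarrow> d \<in> B \<Longrightarrow> a +\<^sub>B b = a +\<^sub>B d \<longleftrightarrow> b = d"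
  by (metis neg_add_cancel_left)

lemma add_right_cancel_iff: "a \<in> B \<Longrightarrow> b \<in> B \<Longrightarrow> d \<in> B \<Longrightarrow> b +\<^sub>B a = d +\<^sub>B a \<longleftrightarrow> b = d"
  using add.right_cancel by simp

lemma add_neg_eq_iff_eq_add:
  assumes "a \<in> B" and "b \<in> B" and "d \<in> B"
  shows "a +\<^sub>B -\<^sub>B b = d \<longleftrightarrow> a = d +\<^sub>B b"
proof
  assume "a +\<^sub>B -\<^sub>B b = d"
  from this[symmetric] show "a = d +\<^sub>B b" using assms by (simp add: add_assoc)
next
  assume "a = d +\<^sub>B b"
  then show "a +\<^sub>B -\<^sub>B b = d" using assms by (simp add: add_assoc)
qed

lemma add_eq_iff_eq_neg_add:
  assumes "a \<in> B" and "b \<in> B" and "d \<in> B"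
  shows "a +\<^sub>B b = d \<longleftrightarrow> b = -\<^sub>B a +\<^sub>B d"
proof
  assume "a +\<^sub>B b = d"
  from this[symmetric] show "b = -\<^sub>B a +\<^sub>B d" using assms by simp
next
  assume "b = -\<^sub>B a +\<^sub>B d"
  then show "a +\<^sub>B b = d" using assms by simp
qed

lemma circ_add_distrib:
  "a \<in> B \<Longrightarrow> b \<in> B \<Longrightarrow> d \<in> B \<Longrightarrow> a \<circ>\<^sub>B (b +\<^sub>B d) = a \<circ>\<^sub>B b +\<^sub>B -\<^sub>B a +\<^sub>B a \<circ>\<^sub>B d"
  using skew_brace by (simp add: skew_brace_def)

lemma circ_group_zero: "group \<lparr>carrier = B, monoid.mult = c, monoid.one = z\<rparr>"
proof -
  obtain e where grp: "group \<lparr>carrier = B, monoid.mult = c, monoid.one = e\<rparr>"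
    using skew_brace unfolding skew_brace_def by auto
  then interpret E: group "\<lparr>carrier = B, monoid.mult = c, monoid.one = e\<rparr>" .
  have e: "e \<in> B" "e \<circ>\<^sub>B z = z" using E.one_closed E.l_one[of z] by simp_all
  then have "z = -\<^sub>B e" using circ_add_distrib[of e z z] by simp
  then have "e = z" using e by (metis neg_neg neg_zero)
  then show ?thesis using grp by simp
qed

lemma circ_one_eq_zero: "circ_one B c = z"
proof -
  interpret E: group "\<lparr>carrier = B, monoid.mult = c, monoid.one = z\<rparr>"
    by (rule circ_group_zero)
  have "z \<in> B \<and> (\<forall>a\<in>B. z \<circ>\<^sub>B a = a \<and> a \<circ>\<^sub>B z = a)"
    using E.l_one E.r_one by simp
  moreover have "e = z" if "e \<in> B" "\<forall>a\<in>B. e \<circ>\<^sub>B a = a \<and> a \<circ>\<^sub>B e = a" for e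
    using E.one_unique[of e] that by simp
  ultimately show ?thesis
    unfolding circ_one_def by (intro the_equality) blast+
qed

sublocale circ: group "circG B c"
  using circ_group_zero by (simp add: circG_def circ_one_eq_zero)

lemma circG_simps [simp]: "carrier (circG B c) = B" "monoid.mult (circG B c) = c" "one (circG B c) = z"
  by (simp_all add: circG_def circ_one_eq_zero)

lemma circ_closed [simp, intro]: "a \<in> B \<Longrightarrow> b \<in> B \<Longrightarrow> a \<circ>\<^sub>B b \<in> B"
  using circ.m_closed by simp

lemma circ_assoc: "a \<in> B \<Longrightarrow> b \<in> B \<Longrightarrow> d \<in> B \<Longrightarrow> a \<circ>\<^sub>B b \<circ>\<^sub>B d = a \<circ>\<^sub>B (b \<circ>\<^sub>B d)"
  using circ.m_assoc by simp

lemma circ_zero_right [simp]: "a \<in> B \<Longrightarrow> a \<circ>\<^sub>B z = a"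
  using circ.r_one by simp

lemma cinv_closed [simp, intro]: "a \<in> B \<Longrightarrow> cinv a \<in> B"
  using circ.inv_closed by simp

lemma circ_cinv_right [simp]: "a \<in> B \<Longrightarrow> a \<circ>\<^sub>B cinv a = z"
  using circ.r_inv by simp

lemma circ_cinv_left [simp]: "a \<in> B \<Longrightarrow> cinv a \<circ>\<^sub>B a = z"
  using circ.l_inv by simp

lemma circ_eq_add_lam: "a \<in> B \<Longrightarrow> b \<in> B \<Longrightarrow> a \<circ>\<^sub>B b = a +\<^sub>B lam a b"
  by (simp add: blam_def)

lemma lam_closed [simp, intro]: "a \<in> B \<Longrightarrow> b \<in> B \<Longrightarrow> lam a b \<in> B"
  by (simp add: blam_def)

lemma lam_add: "a \<in> B \<Longrightarrow> b \<in> B \<Longrightarrow> d \<in> B \<Longrightarrow> lam a (b +\<^sub>B d) = lam a b +\<^sub>B lam a d"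
  by (simp add: blam_def circ_add_distrib add_assoc)

lemma lam_zero [simp]: "a \<in> B \<Longrightarrow> lam a z = z"
  by (simp add: blam_def)

lemma lam_neg: "a \<in> B \<Longrightarrow> b \<in> B \<Longrightarrow> lam a (-\<^sub>B b) = -\<^sub>B lam a b"
  by (metis lam_add add_neg_right lam_zero lam_closed neg_closed neg_eq_if_add_eq_zero)

lemma lam_zero_left [simp]: "b \<in> B \<Longrightarrow> lam z b = b"
  using circ.l_one by (simp add: blam_def)

lemma lam_circ: "a \<in> B \<Longrightarrow> b \<in> B \<Longrightarrow> d \<in> B \<Longrightarrow> lam (a \<circ>\<^sub>B b) d = lam a (lam b d)"
proof -
  assume abd: "a \<in> B" "b \<in> B" "d \<in> B"
  have "a \<circ>\<^sub>B b \<circ>\<^sub>B d = a \<circ>\<^sub>B (b +\<^sub>B lam b d)"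
    using abd by (simp add: circ_assoc circ_eq_add_lam[of b d])
  also have "\<dots> = a \<circ>\<^sub>B b +\<^sub>B lam a (lam b d)"
    using abd by (simp add: circ_eq_add_lam lam_add add_assoc)
  finally show ?thesis
    using abd by (simp add: circ_eq_add_lam[of "a \<circ>\<^sub>B b"] add_left_cancel_iff)
qed

lemma lam_lam_cinv [simp]: "a \<in> B \<Longrightarrow> b \<in> B \<Longrightarrow> lam a (lam (cinv a) b) = b"
  by (simp add: lam_circ[symmetric])

lemma cinv_eq_neg_if_lam_trivial:
  assumes "u \<in> B" and "\<forall>b\<in>B. lam u b = b"
  shows "cinv u = -\<^sub>B u"
proof -
  have "u \<circ>\<^sub>B -\<^sub>B u = z" using assms by (simp add: circ_eq_add_lam)
  then show ?thesis using assms(1) circ.inv_equality circ.inv_comm by simp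
qed

subsection \<open>Ideals\<close>

lemma brace_ideal_subgroup: "brace_ideal B p z c I \<Longrightarrow> subgroup I G"
  by (simp add: brace_ideal_def normal_imp_subgroup)

lemma brace_ideal_lam_closed: "brace_ideal B p z c I \<Longrightarrow> a \<in> B \<Longrightarrow> u \<in> I \<Longrightarrow> lam a u \<in> I"
  by (auto simp: brace_ideal_def)

lemma brace_ideal_carrier: "brace_ideal B p z c B"
  using add.normal_self circ.normal_self by (auto simp: brace_ideal_def)

lemma brace_ideal_Inter:
  assumes "A \<noteq> {}" and "\<And>I. I \<in> A \<Longrightarrow> brace_ideal B p z c I"
  shows "brace_ideal B p z c (\<Inter>A)"
  using assms add.normal_Inter[of A] circ.normal_Inter[of A]
  unfolding brace_ideal_def by blast

lemma brace_ideal_ideal_gen: "S \<subseteq> B \<Longrightarrow> brace_ideal B p z c (ideal_gen B p z c S)"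
  unfolding ideal_gen_def using brace_ideal_carrier by (intro brace_ideal_Inter) auto

lemma subset_ideal_gen: "S \<subseteq> ideal_gen B p z c S"
  by (auto simp: ideal_gen_def)

lemma circ_conj_eq_if_lam_trivial:
  assumes g: "g \<in> B" and s: "s \<in> B" and triv: "\<forall>b\<in>B. lam s b = b"
  shows "g \<circ>\<^sub>B s \<circ>\<^sub>B cinv g = g +\<^sub>B lam g s +\<^sub>B -\<^sub>B g"
proof -
  have "g \<circ>\<^sub>B s \<circ>\<^sub>B cinv g = g \<circ>\<^sub>B (s +\<^sub>B cinv g)"
    using g s triv by (simp add: circ_assoc circ_eq_add_lam[of s "cinv g"])
  also have "\<dots> = g +\<^sub>B lam g s +\<^sub>B -\<^sub>B g"
    using g s by (simp add: circ_add_distrib circ_eq_add_lam[of g s])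
  finally show ?thesis .
qed

text \<open>On S the operations + and \<circ> coincide, so S is also a subgroup of (B,\<circ>), and its
  \<circ>-conjugates are the additive conjugates g + lam g s - g.\<close>
lemma brace_idealI_lam_trivial:
  assumes sub: "subgroup S G"
    and conj: "\<And>g s. g \<in> B \<Longrightarrow> s \<in> S \<Longrightarrow> g +\<^sub>B s +\<^sub>B -\<^sub>B g \<in> S"
    and lam_S: "\<And>a s. a \<in> B \<Longrightarrow> s \<in> S \<Longrightarrow> lam a s \<in> S"
    and triv: "\<And>s b. s \<in> S \<Longrightarrow> b \<in> B \<Longrightarrow> lam s b = b"
  shows "brace_ideal B p z c S"
proof -
  interpret S: subgroup S G by (rule sub)
  have SB: "S \<subseteq> B" using S.subset by simp
  have circ_S: "s \<circ>\<^sub>B b = s +\<^sub>B b" if "s \<in> S" "b \<in> B" for s b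
    using that SB triv by (auto simp: circ_eq_add_lam)
  have cinv_S: "cinv s = -\<^sub>B s" if "s \<in> S" for s
    using that SB triv by (intro cinv_eq_neg_if_lam_trivial) auto
  have "subgroup S (circG B c)"
  proof
    show "\<And>s t. s \<in> S \<Longrightarrow> t \<in> S \<Longrightarrow> s \<otimes>\<^bsub>circG B c\<^esub> t \<in> S"
      using S.m_closed SB by (auto simp: circ_S)
    show "\<And>s. s \<in> S \<Longrightarrow> inv\<^bsub>circG B c\<^esub> s \<in> S"
      using S.m_inv_closed by (simp add: cinv_S)
  qed (use SB S.one_closed in auto)
  moreover have "g \<circ>\<^sub>B s \<circ>\<^sub>B cinv g \<in> S" if "g \<in> B" and "s \<in> S" for g s
    using that SB triv conj lam_S circ_conj_eq_if_lam_trivial by auto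
  ultimately have "S \<lhd> circG B c" by (simp add: circ.normal_inv_iff)
  moreover have "S \<lhd> G" using sub conj by (simp add: add.normal_inv_iff)
  ultimately show ?thesis using lam_S by (auto simp: brace_ideal_def)
qed

subsection \<open>The additive centre and the socle\<close>

lemma add_center_iff: "u \<in> Z \<longleftrightarrow> u \<in> B \<and> (\<forall>b\<in>B. u +\<^sub>B b = b +\<^sub>B u)"
  by (simp add: add_center_def)

lemma subgroup_commuting: "a \<in> B \<Longrightarrow> subgroup {b \<in> B. a +\<^sub>B b = b +\<^sub>B a} G"
proof (rule add.subgroupI)
  fix u v assume a: "a \<in> B" and "u \<in> {b \<in> B. a +\<^sub>B b = b +\<^sub>B a}" "v \<in> {b \<in> B. a +\<^sub>B b = b +\<^sub>B a}"
  then have u: "u \<in> B" "a +\<^sub>B u = u +\<^sub>B a" and v: "v \<in> B" "a +\<^sub>B v = v +\<^sub>B a" by auto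
  have "a +\<^sub>B (u +\<^sub>B v) = u +\<^sub>B a +\<^sub>B v" using a u v by (simp add: add_assoc[symmetric])
  also have "\<dots> = u +\<^sub>B v +\<^sub>B a" using a u v by (simp add: add_assoc)
  finally show "u \<otimes>\<^bsub>G\<^esub> v \<in> {b \<in> B. a +\<^sub>B b = b +\<^sub>B a}" using u v by simp
next
  fix u assume a: "a \<in> B" and "u \<in> {b \<in> B. a +\<^sub>B b = b +\<^sub>B a}"
  then have u: "u \<in> B" "a +\<^sub>B u = u +\<^sub>B a" by auto
  have "a +\<^sub>B -\<^sub>B u = -\<^sub>B u +\<^sub>B (u +\<^sub>B a) +\<^sub>B -\<^sub>B u" using a u by simp
  also have "\<dots> = -\<^sub>B u +\<^sub>B a" using a u by (simp add: add_assoc flip: u(2))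
  finally show "inv\<^bsub>G\<^esub> u \<in> {b \<in> B. a +\<^sub>B b = b +\<^sub>B a}" using u by simp
qed auto

lemma add_center_subgroup: "subgroup Z G"
proof -
  have "Z = \<Inter>((\<lambda>a. {b \<in> B. a +\<^sub>B b = b +\<^sub>B a}) ` B)"
    by (auto simp: add_center_def)
  also have "subgroup \<dots> G"
    by (rule add.subgroups_Inter) (use subgroup_commuting in auto)
  finally show ?thesis .
qed

lemma add_center_iff_commute_generators:
  assumes gen: "generate G S = B"
  shows "a \<in> Z \<longleftrightarrow> a \<in> B \<and> (\<forall>y\<in>S. a +\<^sub>B y = y +\<^sub>B a)"
proof
  have SB: "S \<subseteq> B" using generate.incl[of _ S G] unfolding gen by blast
  show "a \<in> B \<and> (\<forall>y\<in>S. a +\<^sub>B y = y +\<^sub>B a)" if "a \<in> Z"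
    using that SB unfolding add_center_iff by blast
next
  assume a: "a \<in> B \<and> (\<forall>y\<in>S. a +\<^sub>B y = y +\<^sub>B a)"
  have "S \<subseteq> {b \<in> B. a +\<^sub>B b = b +\<^sub>B a}"
    using a gen generate.incl[of _ S G] by blast
  with subgroup_commuting[of a] a have "generate G S \<subseteq> {b \<in> B. a +\<^sub>B b = b +\<^sub>B a}"
    using add.generate_subgroup_incl by blast
  then show "a \<in> Z" using a gen unfolding add_center_iff by blast
qed

lemma add_center_conj: "g \<in> B \<Longrightarrow> u \<in> Z \<Longrightarrow> g +\<^sub>B u +\<^sub>B -\<^sub>B g = u"
  by (auto simp: add_center_iff add_assoc)

lemma bsig_add_center: assumes "a \<in> Z" and "y \<in> B" shows "bsig B p z a y = y"
proof -
  have "a \<in> B" "y +\<^sub>B a = a +\<^sub>B y" using assms by (auto simp: add_center_iff)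
  then show ?thesis using assms(2) by (simp add: bsig_def add_assoc)
qed

lemma lam_add_center: assumes a: "a \<in> B" and u: "u \<in> Z" shows "lam a u \<in> Z"
proof -
  have "lam a u +\<^sub>B b = b +\<^sub>B lam a u" if b: "b \<in> B" for b
  proof -
    define t where "t = lam (cinv a) b"
    have t: "t \<in> B" "b = lam a t" using a b by (simp_all add: t_def)
    have uB: "u \<in> B" "u +\<^sub>B t = t +\<^sub>B u" using u t by (auto simp: add_center_iff)
    have "lam a u +\<^sub>B lam a t = lam a t +\<^sub>B lam a u"
      using a t uB by (simp flip: lam_add)
    then show ?thesis using t by simp
  qed
  moreover have "u \<in> B" using u by (simp add: add_center_iff)
  ultimately show ?thesis using lam_closed[OF a] by (simp add: add_center_iff del: lam_closed)
qed

lemma socle_iff: "u \<in> socle B p z c \<longleftrightarrow> u \<in> B \<and> (\<forall>b\<in>B. lam u b = b) \<and> u \<in> Z"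
  by (simp add: socle_def)

lemma subgroup_socle: "subgroup (socle B p z c) G"
proof
  interpret Z: subgroup Z G by (rule add_center_subgroup)
  fix u w assume "u \<in> socle B p z c" "w \<in> socle B p z c"
  then have u: "u \<in> B" "\<forall>b\<in>B. lam u b = b" "u \<in> Z" and w: "w \<in> B" "\<forall>b\<in>B. lam w b = b" "w \<in> Z"
    by (auto simp: socle_iff)
  have "u +\<^sub>B w = u \<circ>\<^sub>B w" using u w by (simp add: circ_eq_add_lam)
  then show "u \<otimes>\<^bsub>G\<^esub> w \<in> socle B p z c"
    using u w Z.m_closed[of u w] by (simp add: socle_iff lam_circ)
next
  interpret Z: subgroup Z G by (rule add_center_subgroup)
  fix u assume "u \<in> socle B p z c"
  then have u: "u \<in> B" "\<forall>b\<in>B. lam u b = b" "u \<in> Z" by (auto simp: socle_iff)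
  have "lam (-\<^sub>B u) b = b" if "b \<in> B" for b
    using u that lam_lam_cinv[of u b] cinv_eq_neg_if_lam_trivial[of u] by simp
  then show "inv\<^bsub>G\<^esub> u \<in> socle B p z c" using u Z.m_inv_closed[of u] by (simp add: socle_iff)
qed (auto simp: socle_iff subgroup.one_closed[OF add_center_subgroup, simplified])

lemma brace_ideal_socle: "brace_ideal B p z c (socle B p z c)"
proof (rule brace_idealI_lam_trivial[OF subgroup_socle])
  show "g +\<^sub>B s +\<^sub>B -\<^sub>B g \<in> socle B p z c" if "g \<in> B" "s \<in> socle B p z c" for g s
    using that add_center_conj by (simp add: socle_iff)
next
  fix a u assume a: "a \<in> B" and "u \<in> socle B p z c"
  then have u: "u \<in> B" "\<forall>b\<in>B. lam u b = b" "u \<in> Z" by (auto simp: socle_iff)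
  have "a \<circ>\<^sub>B u \<circ>\<^sub>B cinv a = lam a u"
    using a u lam_add_center add_center_conj circ_conj_eq_if_lam_trivial by simp
  then have "lam (lam a u) b = b" if "b \<in> B" for b
    using a u that by (metis lam_circ lam_lam_cinv cinv_closed circ_closed lam_closed)
  then show "lam a u \<in> socle B p z c" using a u lam_add_center by (simp add: socle_iff)
next
  show "lam s b = b" if "s \<in> socle B p z c" "b \<in> B" for s b
    using that by (simp add: socle_iff)
qed

subsection \<open>The ideal B^(2)\<close>

lemma star_eq: "a *\<^sub>B b = lam a b +\<^sub>B -\<^sub>B b"
  by (simp add: bstar_def blam_def)

lemma star_closed [simp, intro]: "a \<in> B \<Longrightarrow> b \<in> B \<Longrightarrow> a *\<^sub>B b \<in> B"
  by (simp add: star_eq)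

lemma star_eq_zero_iff: "a \<in> B \<Longrightarrow> b \<in> B \<Longrightarrow> a *\<^sub>B b = z \<longleftrightarrow> lam a b = b"
  by (metis star_eq add_neg_right add_right_cancel_iff lam_closed neg_closed)

lemma conj_star:
  assumes "a \<in> B" and "g \<in> B" and "b \<in> B"
  shows "g +\<^sub>B a *\<^sub>B b +\<^sub>B -\<^sub>B g = -\<^sub>B (a *\<^sub>B g) +\<^sub>B a *\<^sub>B (g +\<^sub>B b)"
proof -
  have "-\<^sub>B (a *\<^sub>B g) +\<^sub>B a *\<^sub>B (g +\<^sub>B b)
      = g +\<^sub>B -\<^sub>B lam a g +\<^sub>B (lam a g +\<^sub>B lam a b +\<^sub>B (-\<^sub>B b +\<^sub>B -\<^sub>B g))"
    using assms by (simp only: star_eq lam_add neg_add neg_neg lam_closed neg_closed add_closed)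
  also have "\<dots> = g +\<^sub>B (lam a b +\<^sub>B -\<^sub>B b) +\<^sub>B -\<^sub>B g"
    using assms by (simp add: add_assoc)
  finally show ?thesis using assms by (simp add: star_eq)
qed

lemma lam_star:
  assumes "a \<in> B" and "d \<in> B" and "b \<in> B"
  shows "lam d (a *\<^sub>B b) = (d \<circ>\<^sub>B a \<circ>\<^sub>B cinv d) *\<^sub>B lam d b"
proof -
  have "lam (d \<circ>\<^sub>B a \<circ>\<^sub>B cinv d) (lam d b) = lam (d \<circ>\<^sub>B a) b"
    using assms by (simp add: lam_circ[symmetric] circ_assoc)
  then show ?thesis using assms by (simp add: star_eq lam_add lam_neg lam_circ)
qed

lemma B2_eq_generate: "B2 = generate G {a *\<^sub>B b | a b. a \<in> B \<and> b \<in> B}"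
  unfolding star_set_def by (rule arg_cong[where f = "generate G"]) blast

lemma B2_subgroup: "subgroup B2 G"
  unfolding B2_eq_generate by (rule add.generate_is_subgroup) auto

interpretation B2: subgroup B2 G
  by (rule B2_subgroup)

lemma star_in_B2: "a \<in> B \<Longrightarrow> b \<in> B \<Longrightarrow> a *\<^sub>B b \<in> B2"
  unfolding B2_eq_generate by (rule generate.incl) blast

lemma B2_conj_closed:
  assumes g: "g \<in> B" and w: "w \<in> B2"
  shows "g +\<^sub>B w +\<^sub>B -\<^sub>B g \<in> B2"
  using w[unfolded B2_eq_generate]
proof (induction rule: generate.induct)
  case one
  show ?case using g B2.one_closed by simp
next
  case (incl h)
  then obtain a b where ab: "a \<in> B" "b \<in> B" "h = a *\<^sub>B b" by auto
  show ?case
    using ab g conj_star B2.m_closed B2.m_inv_closed star_in_B2 by simp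
next
  case (inv h)
  then obtain a b where ab: "a \<in> B" "b \<in> B" "h = a *\<^sub>B b" by auto
  have "g +\<^sub>B h +\<^sub>B -\<^sub>B g \<in> B2"
    using ab g conj_star B2.m_closed B2.m_inv_closed star_in_B2 by simp
  moreover have "g +\<^sub>B -\<^sub>B h +\<^sub>B -\<^sub>B g = -\<^sub>B (g +\<^sub>B h +\<^sub>B -\<^sub>B g)"
    using ab g by (simp add: neg_add add_assoc)
  ultimately show ?case using B2.m_inv_closed by simp
next
  case (eng h1 h2)
  have "h1 \<in> B" "h2 \<in> B" using eng(1,2) B2_eq_generate B2.subset by auto
  then have "g +\<^sub>B (h1 +\<^sub>B h2) +\<^sub>B -\<^sub>B g = (g +\<^sub>B h1 +\<^sub>B -\<^sub>B g) +\<^sub>B (g +\<^sub>B h2 +\<^sub>B -\<^sub>B g)"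
    using g by (simp add: add_assoc)
  then show ?case using eng B2.m_closed by simp
qed

lemma B2_lam_closed:
  assumes d: "d \<in> B" and w: "w \<in> B2"
  shows "lam d w \<in> B2"
  using w[unfolded B2_eq_generate]
proof (induction rule: generate.induct)
  case one
  show ?case using d B2.one_closed by simp
next
  case (incl h)
  then show ?case using d lam_star star_in_B2 by auto
next
  case (inv h)
  then obtain a b where ab: "a \<in> B" "b \<in> B" "h = a *\<^sub>B b" by auto
  then show ?case using d lam_star star_in_B2 lam_neg B2.m_inv_closed by simp
next
  case (eng h1 h2)
  have "h1 \<in> B" "h2 \<in> B" using eng(1,2) B2_eq_generate B2.subset by auto
  then show ?case using eng d lam_add B2.m_closed by simp
qed

lemma brace_ideal_B2:
  assumes "\<And>w b. w \<in> B2 \<Longrightarrow> b \<in> B \<Longrightarrow> lam w b = b"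
  shows "brace_ideal B p z c B2"
  using B2_subgroup B2_conj_closed B2_lam_closed assms
  by (rule brace_idealI_lam_trivial)

lemma lam_trivial_on_B2:
  assumes B3: "star_set B p z c B2 B = {z}" and w: "w \<in> B2" and b: "b \<in> B"
  shows "lam w b = b"
proof -
  have "w \<in> B" using w subgroup.subset[OF B2_subgroup] by auto
  moreover have "w *\<^sub>B b \<in> star_set B p z c B2 B"
    unfolding star_set_def[of B p z c B2 B] using w b by (intro generate.incl) blast
  ultimately show ?thesis using B3 b star_eq_zero_iff by auto
qed

subsection \<open>Minimal ideals\<close>

lemma lam_trivial_on_minimal_ideal:
  assumes B3: "star_set B p z c B2 B = {z}"
    and min: "\<forall>I. brace_ideal B p z c I \<and> I \<noteq> {z} \<longrightarrow> V \<subseteq> I"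
    and "V \<subseteq> B" and "u \<in> V" and "b \<in> B"
  shows "lam u b = b"
proof (cases "B2 = {z}")
  case True
  then show ?thesis using assms(3-5) star_in_B2 star_eq_zero_iff by blast
next
  case False
  then have "V \<subseteq> B2"
    using min brace_ideal_B2 lam_trivial_on_B2[OF B3] by blast
  then show ?thesis using assms(4,5) lam_trivial_on_B2[OF B3] by blast
qed

lemma not_subset_add_center_if_transitive:
  assumes Xs: "Xs \<subseteq> B" "2 \<le> card Xs"
    and trans: "\<forall>y\<in>Xs. \<forall>y'\<in>Xs. \<exists>a\<in>V. \<exists>b\<in>V. bsig B p z a (lam b y) = y'"
    and triv: "\<And>u b. u \<in> V \<Longrightarrow> b \<in> B \<Longrightarrow> lam u b = b"
  shows "\<not> V \<subseteq> Z"
proof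
  assume VZ: "V \<subseteq> Z"
  have "y = y'" if y: "y \<in> Xs" "y' \<in> Xs" for y y'
  proof -
    obtain a b where ab: "a \<in> V" "b \<in> V" and "bsig B p z a (lam b y) = y'"
      using trans y by blast
    moreover have "lam b y = y" using triv ab y Xs(1) by blast
    moreover have "a \<in> Z" using VZ ab by blast
    ultimately show ?thesis using bsig_add_center y Xs(1) by (metis subsetD)
  qed
  moreover have "finite Xs" using Xs(2) card.infinite by fastforce
  ultimately have "card Xs \<le> Suc 0" using card_le_Suc0_iff_eq by blast
  then show False using Xs(2) by simp
qed

lemma minimal_ideal_inter_add_center:
  assumes V: "brace_ideal B p z c V"
    and min: "\<forall>I. brace_ideal B p z c I \<and> I \<noteq> {z} \<longrightarrow> V \<subseteq> I"
    and triv: "\<And>u b. u \<in> V \<Longrightarrow> b \<in> B \<Longrightarrow> lam u b = b"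
    and not_central: "\<not> V \<subseteq> Z"
  shows "V \<inter> Z = {z}"
proof -
  have sub: "subgroup (V \<inter> Z) G"
    using brace_ideal_subgroup[OF V] add_center_subgroup by (rule add.subgroups_Inter_pair)
  have "brace_ideal B p z c (V \<inter> Z)"
  proof (rule brace_idealI_lam_trivial[OF sub])
    show "g +\<^sub>B s +\<^sub>B -\<^sub>B g \<in> V \<inter> Z" if "g \<in> B" "s \<in> V \<inter> Z" for g s
      using that add_center_conj by simp
    show "lam a s \<in> V \<inter> Z" if "a \<in> B" "s \<in> V \<inter> Z" for a s
      using that brace_ideal_lam_closed[OF V] lam_add_center by simp
    show "lam s b = b" if "s \<in> V \<inter> Z" "b \<in> B" for s b
      using that triv by simp
  qed
  then have "V \<inter> Z \<noteq> {z} \<Longrightarrow> V \<subseteq> V \<inter> Z" using min by blast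
  moreover have "z \<in> V \<inter> Z" using subgroup.one_closed[OF sub] by simp
  ultimately show ?thesis using not_central by blast
qed

lemma socle_eq_zero_if_minimal:
  assumes min: "\<forall>I. brace_ideal B p z c I \<and> I \<noteq> {z} \<longrightarrow> V \<subseteq> I"
    and not_central: "\<not> V \<subseteq> Z"
  shows "socle B p z c = {z}"
proof -
  have "socle B p z c \<noteq> {z} \<Longrightarrow> V \<subseteq> socle B p z c" using min brace_ideal_socle by blast
  moreover have "socle B p z c \<subseteq> Z" by (auto simp: socle_iff)
  moreover have "z \<in> socle B p z c"
    using subgroup.one_closed[OF brace_ideal_subgroup[OF brace_ideal_socle]] by simp
  ultimately show ?thesis using not_central by blast
qed

subsection \<open>Central elements\<close>

lemma nat_pow_commute: "x \<in> B \<Longrightarrow> pow G x (i::nat) +\<^sub>B x = x +\<^sub>B pow G x i"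
  using add.nat_pow_Suc[of x i] add.nat_pow_Suc2[of x i] by simp

lemma conj_iterate:
  assumes x: "x \<in> B" and w: "w \<in> B"
  shows "((\<lambda>u. x +\<^sub>B u +\<^sub>B -\<^sub>B x) ^^ i) w = pow G x i +\<^sub>B w +\<^sub>B -\<^sub>B pow G x i"
proof (induction i)
  case 0
  then show ?case using w by simp
next
  case (Suc i)
  have "pow G x i \<in> B" using add.nat_pow_closed x by simp
  moreover have "pow G x (Suc i) = x +\<^sub>B pow G x i" using add.nat_pow_Suc2 x by simp
  ultimately show ?case using Suc x w by (simp add: neg_add add_assoc del: add.nat_pow_Suc)
qed

lemma commute_sum_iff_conj_fixed:
  assumes v: "v \<in> B" and u: "u \<in> B" and x: "x \<in> B" and ux: "u +\<^sub>B x = x +\<^sub>B u"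
  shows "v +\<^sub>B u +\<^sub>B x = x +\<^sub>B (v +\<^sub>B u) \<longleftrightarrow> x +\<^sub>B v +\<^sub>B -\<^sub>B x = v"
proof -
  have "v +\<^sub>B u +\<^sub>B x = x +\<^sub>B (v +\<^sub>B u) \<longleftrightarrow> v +\<^sub>B x +\<^sub>B u = x +\<^sub>B v +\<^sub>B u"
    using assms by (simp add: add_assoc)
  also have "\<dots> \<longleftrightarrow> x +\<^sub>B v = v +\<^sub>B x" using assms by (auto simp: add_right_cancel_iff)
  also have "\<dots> \<longleftrightarrow> x +\<^sub>B v +\<^sub>B -\<^sub>B x = v" using assms by (simp add: add_neg_eq_iff_eq_add)
  finally show ?thesis .
qed

lemma commute_sum_iff_conj_eq:
  assumes v: "v \<in> B" and u: "u \<in> B" and w: "w \<in> B"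
  shows "v +\<^sub>B u +\<^sub>B w = w +\<^sub>B (v +\<^sub>B u) \<longleftrightarrow> u +\<^sub>B w +\<^sub>B -\<^sub>B u = -\<^sub>B v +\<^sub>B w +\<^sub>B v"
proof -
  have "v +\<^sub>B u +\<^sub>B w = w +\<^sub>B (v +\<^sub>B u)
      \<longleftrightarrow> v +\<^sub>B u +\<^sub>B w +\<^sub>B -\<^sub>B u = w +\<^sub>B (v +\<^sub>B u) +\<^sub>B -\<^sub>B u"
    using assms by (simp add: add_right_cancel_iff)
  also have "\<dots> \<longleftrightarrow> v +\<^sub>B (u +\<^sub>B w +\<^sub>B -\<^sub>B u) = w +\<^sub>B v" using assms by (simp add: add_assoc)
  also have "\<dots> \<longleftrightarrow> u +\<^sub>B w +\<^sub>B -\<^sub>B u = -\<^sub>B v +\<^sub>B w +\<^sub>B v"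
    using assms by (simp add: add_eq_iff_eq_neg_add add_assoc)
  finally show ?thesis .
qed

lemma add_center_iff_commute_x_and_V:
  assumes gen: "generate G Xs = B" and x: "x \<in> Xs" and V: "V \<subseteq> B"
    and diffs: "\<forall>y\<in>Xs. y +\<^sub>B -\<^sub>B x \<in> V" and a: "a \<in> B"
  shows "a \<in> Z \<longleftrightarrow> a +\<^sub>B x = x +\<^sub>B a \<and> (\<forall>w\<in>V. a +\<^sub>B w = w +\<^sub>B a)"
proof -
  have XsB: "Xs \<subseteq> B" using generate.incl[of _ Xs G] unfolding gen by blast
  have commute_Xs: "a +\<^sub>B y = y +\<^sub>B a"
    if y: "y \<in> Xs" and ax: "a +\<^sub>B x = x +\<^sub>B a" and aV: "\<forall>w\<in>V. a +\<^sub>B w = w +\<^sub>B a" for y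
  proof -
    define u where "u = y +\<^sub>B -\<^sub>B x"
    have u: "u \<in> V" "u \<in> B" using diffs y V unfolding u_def by auto
    have xy: "x \<in> B" "y \<in> B" using x y XsB by auto
    have au: "a +\<^sub>B u = u +\<^sub>B a" using aV u by blast
    have y_eq: "y = u +\<^sub>B x" using xy unfolding u_def by (simp add: add_assoc)
    have "a +\<^sub>B (u +\<^sub>B x) = u +\<^sub>B (a +\<^sub>B x)" using a u xy au by (simp add: add_assoc[symmetric])
    also have "\<dots> = u +\<^sub>B x +\<^sub>B a" using a u xy ax by (simp add: add_assoc)
    finally show ?thesis unfolding y_eq .
  qed
  show ?thesis
  proof
    assume "a \<in> Z"
    then show "a +\<^sub>B x = x +\<^sub>B a \<and> (\<forall>w\<in>V. a +\<^sub>B w = w +\<^sub>B a)"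
      using x XsB V unfolding add_center_iff by blast
  next
    assume "a +\<^sub>B x = x +\<^sub>B a \<and> (\<forall>w\<in>V. a +\<^sub>B w = w +\<^sub>B a)"
    then have "\<forall>y\<in>Xs. a +\<^sub>B y = y +\<^sub>B a" using commute_Xs by blast
    then show "a \<in> Z" using add_center_iff_commute_generators[OF gen] a by blast
  qed
qed

lemma add_center_iff_conj_iterate:
  assumes gen: "generate G Xs = B" and x: "x \<in> Xs" and V: "V \<subseteq> B"
    and diffs: "\<forall>y\<in>Xs. y +\<^sub>B -\<^sub>B x \<in> V" and v: "v \<in> V"
  shows "v +\<^sub>B pow G x i \<in> Z \<longleftrightarrow>
           x +\<^sub>B v +\<^sub>B -\<^sub>B x = v \<and> (\<forall>w\<in>V. ((\<lambda>u. x +\<^sub>B u +\<^sub>B -\<^sub>B x) ^^ i) w = -\<^sub>B v +\<^sub>B w +\<^sub>B v)"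
proof -
  have xB: "x \<in> B" using generate.incl[of x Xs G] x unfolding gen .
  have vB: "v \<in> B" using v V by blast
  have powB: "pow G x i \<in> B" using add.nat_pow_closed xB by simp
  have commute_w: "v +\<^sub>B pow G x i +\<^sub>B w = w +\<^sub>B (v +\<^sub>B pow G x i)
      \<longleftrightarrow> ((\<lambda>u. x +\<^sub>B u +\<^sub>B -\<^sub>B x) ^^ i) w = -\<^sub>B v +\<^sub>B w +\<^sub>B v" if "w \<in> V" for w
  proof -
    have wB: "w \<in> B" using that V by blast
    show ?thesis by (simp only: conj_iterate[OF xB wB] commute_sum_iff_conj_eq[OF vB powB wB])
  qed
  show ?thesis
    unfolding add_center_iff_commute_x_and_V[OF gen x V diffs add_closed[OF vB powB]]
      commute_sum_iff_conj_fixed[OF vB powB xB nat_pow_commute[OF xB]]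
    using commute_w by simp
qed

end

theorem lemma5p5:
  fixes B :: "'a set" and p c :: "'a \<Rightarrow> 'a \<Rightarrow> 'a" and z :: 'a
    and Xs V :: "'a set" and x v :: 'a and i :: nat
  assumes brace: "skew_brace B p z c"
    and finB: "finite B"
    and XB: "Xs \<subseteq> B" and cardX: "card Xs \<ge> 3"
    and lamX: "\<forall>a\<in>B. blam B p z c a ` Xs = Xs"
    and sigX: "\<forall>a\<in>B. bsig B p z a ` Xs = Xs"
    and genX: "generate (addG B p z) Xs = B"
    and V_def: "V = ideal_gen B p z c {u. \<exists>y\<in>Xs. \<exists>y'\<in>Xs. u = p y (bneg B p z y')}"
    and V_min: "V \<noteq> {z} \<and> (\<forall>I. brace_ideal B p z c I \<and> I \<noteq> {z} \<longrightarrow> V \<subseteq> I)"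
    and quot_trivial: "\<forall>a\<in>B. \<forall>b\<in>B. p (bneg B p z (p a b)) (c a b) \<in> V"
    and quot_cyclic: "\<exists>g\<in>B. \<forall>b\<in>B. \<exists>n::int. p (bneg B p z (pow (addG B p z) g n)) b \<in> V"
    and trans: "\<forall>y\<in>Xs. \<forall>y'\<in>Xs. \<exists>a\<in>V. \<exists>b\<in>V. bsig B p z a (blam B p z c b y) = y'"
    and B3: "star_set B p z c (star_set B p z c B B) B = {z}"
    and xX: "x \<in> Xs"
    and vV: "v \<in> V"
    and ik: "i < card (RCOSETS (addG B p z) V)"
  shows "(p v (pow (addG B p z) x i) \<in> add_center B p \<longleftrightarrow>
            p (p x v) (bneg B p z x) = v \<and>
            (\<forall>w\<in>V. ((\<lambda>u. p (p x u) (bneg B p z x)) ^^ i) w = p (p (bneg B p z v) w) v))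
       \<and> V \<inter> add_center B p = {z}
       \<and> socle B p z c = {z}"
proof -
  interpret skew_left_brace B p z c by (rule skew_left_brace.intro) (rule brace)
  have min: "\<forall>I. brace_ideal B p z c I \<and> I \<noteq> {z} \<longrightarrow> V \<subseteq> I" using V_min by blast
  have V_ideal: "brace_ideal B p z c V"
    unfolding V_def using XB by (intro brace_ideal_ideal_gen) auto
  have VB: "V \<subseteq> B" using subgroup.subset[OF brace_ideal_subgroup[OF V_ideal]] by simp
  have diffs: "\<forall>y\<in>Xs. p y (bneg B p z x) \<in> V"
    using subset_ideal_gen[of "{u. \<exists>y\<in>Xs. \<exists>y'\<in>Xs. u = p y (bneg B p z y')}"] xX
    unfolding V_def by blast
  have triv: "\<And>u b. u \<in> V \<Longrightarrow> b \<in> B \<Longrightarrow> blam B p z c u b = b"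
    using lam_trivial_on_minimal_ideal[OF B3 min VB] .
  have "2 \<le> card Xs" using cardX by linarith
  then have not_central: "\<not> V \<subseteq> add_center B p"
    using not_subset_add_center_if_transitive[OF XB _ trans triv] by blast
  show ?thesis
    using add_center_iff_conj_iterate[OF genX xX VB diffs vV]
      minimal_ideal_inter_add_center[OF V_ideal min triv not_central]
      socle_eq_zero_if_minimal[OF min not_central]
    by blast
qed

end
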